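(* Let $a=(a_1,\dots,a_m)$ be a composition with $a_m=2$, and let $a'=(a_1,\dots,a_{m-1},1,1)$. Then for every $n\ge 0$, the number of compositions of size $n$ that dominate $a$ equals the number of compositions of size $n$ that dominate $a'$.
   Context: A composition is a finite sequence of positive integers; its size is the sum of its components. A composition $b=(b_1,\dots,b_k)$ dominates $a=(a_1,\dots,a_m)$ if there are indices $1\le i(1)<i(2)<\dots<i(m)\le k$ with $a_j\le b_{i(j)}$ for every $j\in[m]$. *)

theory Defs
  imports Main
begin

definition composition :: "nat list \<Rightarrow> bool" where
  "composition c \<longleftrightarrow> (\<forall>x\<in>set c. 0 < x)"

definition dominates :: "nat list \<Rightarrow> nat list \<Rightarrow> bool" where
  "dominates b a \<longleftrightarrow>
     (\<exists>i :: nat \<Rightarrow> nat. strict_mono_on {..<length a} i \<and>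
        (\<forall>j<length a. i j < length b \<and> a ! j \<le> b ! i j))"

definition dominating_compositions :: "nat list \<Rightarrow> nat \<Rightarrow> nat list set" where
  "dominating_compositions a n = {b. composition b \<and> sum_list b = n \<and> dominates b a}"

end

theory Submission
  imports Defs "HOL-Library.Sublist"
begin

text \<open>Domination is the embedding relation \<open>list_emb (\<le>)\<close>, which can be decided greedily:
  each part of \<open>a\<close> is matched with the first admissible part of \<open>b\<close>. Write \<open>a = p @ [2]\<close>.
  Run the greedy embedding of \<open>p\<close> into \<open>b\<close>; the parts of \<open>b\<close> after it form a composition
  \<open>c\<close>, and \<open>b\<close> dominates \<open>p @ [2]\<close> iff \<open>c\<close> has a part \<open>\<ge> 2\<close>, while \<open>b\<close> dominates
  \<open>p @ [1, 1]\<close> iff \<open>c\<close> has at least two parts. For compositions these conditions agree except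
  on \<open>(1, \<dots>, 1)\<close> and \<open>(s)\<close> with \<open>s \<ge> 2\<close>, so exchanging these two tails, and leaving
  everything else alone, is a size-preserving involution that maps one set onto the other.\<close>

lemma index_imp_list_emb:
  assumes "strict_mono_on {..<length xs} i"
    and "\<forall>j<length xs. i j < length ys \<and> P (xs ! j) (ys ! i j)"
  shows "list_emb P xs ys"
  using assms
proof (induction ys arbitrary: xs i)
  case Nil
  then show ?case by (cases xs) auto
next
  case (Cons y ys)
  show ?case
  proof (cases xs)
    case (Cons x xs')
    have mono: "i j < i k" if "j < k" "k \<le> length xs'" for j k
      using strict_mono_onD[OF Cons.prems(1)] that Cons by auto
    have match: "i j < Suc (length ys) \<and> P ((x # xs') ! j) ((y # ys) ! i j)"
      if "j \<le> length xs'" for j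
      using Cons.prems(2) that Cons by (simp add: less_Suc_eq_le)
    show ?thesis
    proof (cases "i 0 = 0")
      case True
      have pos: "0 < i (Suc j)" if "j < length xs'" for j
        using mono[of 0 "Suc j"] that True by simp
      have "strict_mono_on {..<length xs'} (\<lambda>j. i (Suc j) - 1)"
      proof (rule strict_mono_onI)
        fix r s assume "r \<in> {..<length xs'}" "s \<in> {..<length xs'}" "r < s"
        then show "i (Suc r) - 1 < i (Suc s) - 1"
          using mono[of "Suc r" "Suc s"] pos[of r] by simp
      qed
      moreover have
        "\<forall>j<length xs'. i (Suc j) - 1 < length ys \<and> P (xs' ! j) (ys ! (i (Suc j) - 1))"
      proof (intro allI impI)
        fix j assume "j < length xs'"
        with match[of "Suc j"] pos[of j]
        show "i (Suc j) - 1 < length ys \<and> P (xs' ! j) (ys ! (i (Suc j) - 1))"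
          by (cases "i (Suc j)") auto
      qed
      ultimately have "list_emb P xs' ys" by (rule Cons.IH)
      moreover have "P x y" using match[of 0] True by simp
      ultimately show ?thesis using Cons by blast
    next
      case False
      have pos: "0 < i j" if "j \<le> length xs'" for j
        using mono[of 0 j] that False by (cases j) auto
      have "strict_mono_on {..<length xs} (\<lambda>j. i j - 1)"
      proof (rule strict_mono_onI)
        fix r s assume "r \<in> {..<length xs}" "s \<in> {..<length xs}" "r < s"
        then show "i r - 1 < i s - 1"
          using mono[of r s] pos[of r] Cons by simp
      qed
      moreover have "\<forall>j<length xs. i j - 1 < length ys \<and> P (xs ! j) (ys ! (i j - 1))"
      proof (intro allI impI)
        fix j assume "j < length xs"
        with match[of j] pos[of j] Cons
        show "i j - 1 < length ys \<and> P (xs ! j) (ys ! (i j - 1))"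
          by (cases "i j") auto
      qed
      ultimately have "list_emb P xs ys" by (rule Cons.IH)
      then show ?thesis by blast
    qed
  qed simp
qed

lemma list_emb_imp_index:
  assumes "list_emb P xs ys"
  shows "\<exists>i. strict_mono_on {..<length xs} i \<and>
           (\<forall>j<length xs. i j < length ys \<and> P (xs ! j) (ys ! i j))"
  using assms
proof induction
  case (list_emb_Nil ys)
  show ?case by (auto intro: strict_mono_onI)
next
  case (list_emb_Cons xs ys y)
  then obtain i where "strict_mono_on {..<length xs} i"
    and "\<forall>j<length xs. i j < length ys \<and> P (xs ! j) (ys ! i j)" by blast
  then show ?case
    by (intro exI[of _ "Suc \<circ> i"]) (auto simp: strict_mono_on_def)
next
  case (list_emb_Cons2 x y xs ys)
  then obtain i where "strict_mono_on {..<length xs} i"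
    and "\<forall>j<length xs. i j < length ys \<and> P (xs ! j) (ys ! i j)" by blast
  with \<open>P x y\<close> show ?case
    by (intro exI[of _ "\<lambda>j. case j of 0 \<Rightarrow> 0 | Suc k \<Rightarrow> Suc (i k)"])
      (auto simp: strict_mono_on_def nth_Cons' split: nat.split)
qed

lemma list_emb_iff_index:
  "list_emb P xs ys \<longleftrightarrow>
     (\<exists>i. strict_mono_on {..<length xs} i \<and>
        (\<forall>j<length xs. i j < length ys \<and> P (xs ! j) (ys ! i j)))"
  using list_emb_imp_index index_imp_list_emb by blast

lemma dominates_iff_list_emb: "dominates b a \<longleftrightarrow> list_emb (\<le>) a b"
  unfolding dominates_def list_emb_iff_index ..

text \<open>The parts of \<open>ys\<close> scanned by the greedy embedding of \<open>xs\<close> are kept and \<open>f\<close> is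
  applied to the remaining suffix (if the embedding fails, \<open>f\<close> is never applied). As the kept prefix is unchanged, the greedy run on the image
  is the same, which is why properties of \<open>f\<close> such as being an involution carry over.\<close>

fun map_after_greedy_emb ::
  "('a \<Rightarrow> 'a \<Rightarrow> bool) \<Rightarrow> ('a list \<Rightarrow> 'a list) \<Rightarrow> 'a list \<Rightarrow> 'a list \<Rightarrow> 'a list" where
  "map_after_greedy_emb P f [] ys = f ys"
| "map_after_greedy_emb P f (x # xs) [] = []"
| "map_after_greedy_emb P f (x # xs) (y # ys) =
     y # (if P x y then map_after_greedy_emb P f xs ys else map_after_greedy_emb P f (x # xs) ys)"

lemma map_after_greedy_emb_involution:
  assumes "\<And>zs. f (f zs) = zs"
  shows "map_after_greedy_emb P f xs (map_after_greedy_emb P f xs ys) = ys"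
  using assms by (induction P f xs ys rule: map_after_greedy_emb.induct) simp_all

lemma sum_list_map_after_greedy_emb:
  assumes "\<And>zs. sum_list (f zs) = sum_list zs"
  shows "sum_list (map_after_greedy_emb P f xs ys) = sum_list ys"
  using assms by (induction P f xs ys rule: map_after_greedy_emb.induct) simp_all

lemma set_map_after_greedy_emb:
  assumes "\<And>zs. \<forall>z\<in>set zs. Q z \<Longrightarrow> \<forall>z\<in>set (f zs). Q z"
    and "\<forall>y\<in>set ys. Q y"
  shows "\<forall>y\<in>set (map_after_greedy_emb P f xs ys). Q y"
  using assms by (induction P f xs ys rule: map_after_greedy_emb.induct) auto

lemma list_emb_map_after_greedy_emb:
  assumes "\<And>zs. suffix zs ys \<Longrightarrow> list_emb P us zs \<longleftrightarrow> list_emb P vs (f zs)"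
  shows "list_emb P (xs @ us) ys \<longleftrightarrow> list_emb P (xs @ vs) (map_after_greedy_emb P f xs ys)"
  using assms
  by (induction P f xs ys rule: map_after_greedy_emb.induct)
    (auto simp: suffix_ConsI)

lemma list_emb_singleton_iff: "list_emb P [x] ys \<longleftrightarrow> (\<exists>y\<in>set ys. P x y)"
  by (induction ys) (auto simp: list_emb_code)

lemma list_emb_one_one_iff:
  assumes "composition c"
  shows "list_emb (\<le>) [1, 1 :: nat] c \<longleftrightarrow> 2 \<le> length c"
proof (cases c)
  case (Cons y ys)
  with assms have "\<forall>z\<in>set (y # ys). 1 \<le> z"
    by (auto simp: composition_def Suc_le_eq)
  then have "1 \<le> y" and "(\<exists>z\<in>set ys. 1 \<le> z) \<longleftrightarrow> ys \<noteq> []"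
    by (induction ys) auto
  with Cons show ?thesis
    by (simp add: list_emb_singleton_iff Suc_le_eq del: list_emb_code)
qed simp

lemma composition_replicate_one:
  assumes "composition c" and "\<forall>y\<in>set c. y < 2"
  shows "c = replicate (length c) 1"
  using assms by (induction c) (auto simp: composition_def)

definition swap_ones_single :: "nat list \<Rightarrow> nat list" where
  "swap_ones_single c =
     (let s = sum_list c in
      if 2 \<le> s \<and> c = replicate s 1 then [s]
      else if 2 \<le> s \<and> c = [s] then replicate s 1
      else c)"

lemma swap_ones_single_replicate: "2 \<le> s \<Longrightarrow> swap_ones_single (replicate s 1) = [s]"
  by (simp add: swap_ones_single_def sum_list_replicate)

lemma swap_ones_single_single: "2 \<le> s \<Longrightarrow> swap_ones_single [s] = replicate s 1"
proof -
  assume "2 \<le> s"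
  then have "[s] \<noteq> replicate s 1" by (auto dest: arg_cong[of _ _ length])
  with \<open>2 \<le> s\<close> show ?thesis by (simp add: swap_ones_single_def)
qed

lemma swap_ones_single_cases:
  obtains s where "2 \<le> s" "c = replicate s 1"
  | s where "2 \<le> s" "c = [s]"
  | "swap_ones_single c = c" "\<nexists>s. 2 \<le> s \<and> c = replicate s 1" "\<nexists>s. 2 \<le> s \<and> c = [s]"
proof -
  have "swap_ones_single c = c"
    if "\<nexists>s. 2 \<le> s \<and> c = replicate s 1" and "\<nexists>s. 2 \<le> s \<and> c = [s]"
    using that by (auto simp: swap_ones_single_def Let_def)
  then show ?thesis using that by blast
qed

lemma swap_ones_single_involution: "swap_ones_single (swap_ones_single c) = c"
  by (cases c rule: swap_ones_single_cases)
    (simp_all add: swap_ones_single_replicate swap_ones_single_single del: One_nat_def)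

lemma sum_list_swap_ones_single: "sum_list (swap_ones_single c) = sum_list c"
  by (simp add: swap_ones_single_def Let_def sum_list_replicate)

lemma composition_swap_ones_single: "composition c \<Longrightarrow> composition (swap_ones_single c)"
  by (auto simp: swap_ones_single_def Let_def composition_def)

lemma composition_has_part_ge2_iff_length:
  assumes "composition c"
    and "\<nexists>s. 2 \<le> s \<and> c = replicate s 1" and "\<nexists>s. 2 \<le> s \<and> c = [s]"
  shows "(\<exists>y\<in>set c. 2 \<le> y) \<longleftrightarrow> 2 \<le> length c"
proof
  assume "\<exists>y\<in>set c. 2 \<le> y"
  then obtain y where "y \<in> set c" "2 \<le> y" by blast
  show "2 \<le> length c"
  proof (rule ccontr)
    assume "\<not> 2 \<le> length c"
    with \<open>y \<in> set c\<close> have "c = [y]" by (cases c) (auto simp: Suc_le_eq)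
    with \<open>2 \<le> y\<close> assms(3) show False by blast
  qed
next
  assume "2 \<le> length c"
  with assms(1,2) composition_replicate_one[of c] show "\<exists>y\<in>set c. 2 \<le> y"
    by (metis not_less)
qed

lemma list_emb_two_iff_one_one_swap:
  assumes "composition c"
  shows "list_emb (\<le>) [2 :: nat] c \<longleftrightarrow> list_emb (\<le>) [1, 1] (swap_ones_single c)"
proof (cases c rule: swap_ones_single_cases)
  case (1 s)
  then show ?thesis
    by (simp add: swap_ones_single_replicate list_emb_singleton_iff del: One_nat_def)
next
  case (2 s)
  then show ?thesis
    by (simp add: swap_ones_single_single list_emb_singleton_iff list_emb_one_one_iff
        composition_def del: One_nat_def)
next
  case 3
  with assms show ?thesis
    by (simp add: list_emb_singleton_iff list_emb_one_one_iff composition_has_part_ge2_iff_length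
        del: One_nat_def)
qed

abbreviation swap_tail_after :: "nat list \<Rightarrow> nat list \<Rightarrow> nat list" where
  "swap_tail_after p \<equiv> map_after_greedy_emb (\<le>) swap_ones_single p"

lemma swap_tail_after_involution: "swap_tail_after p (swap_tail_after p b) = b"
  by (simp add: map_after_greedy_emb_involution swap_ones_single_involution)

lemma composition_swap_tail_after:
  assumes "composition b"
  shows "composition (swap_tail_after p b)"
  using assms composition_swap_ones_single
  unfolding composition_def by (intro set_map_after_greedy_emb) auto

lemma dominating_compositions_swap_tail_after:
  "b \<in> dominating_compositions (p @ [2]) n \<longleftrightarrow>
     swap_tail_after p b \<in> dominating_compositions (p @ [1, 1]) n"
proof -
  have "composition (swap_tail_after p b) \<longleftrightarrow> composition b"
    by (metis composition_swap_tail_after swap_tail_after_involution)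
  moreover have "sum_list (swap_tail_after p b) = sum_list b"
    by (simp add: sum_list_map_after_greedy_emb sum_list_swap_ones_single)
  moreover have "list_emb (\<le>) (p @ [2]) b \<longleftrightarrow> list_emb (\<le>) (p @ [1, 1]) (swap_tail_after p b)"
    if "composition b"
    using that
    by (intro list_emb_map_after_greedy_emb list_emb_two_iff_one_one_swap)
      (auto simp: composition_def dest: set_mono_suffix)
  ultimately show ?thesis
    by (auto simp: dominating_compositions_def dominates_iff_list_emb simp del: One_nat_def)
qed

lemma card_eq_by_involution:
  assumes "\<And>x. f (f x) = x" and "\<And>x. x \<in> A \<longleftrightarrow> f x \<in> B"
  shows "card A = card B"
proof -
  have "B = f ` A"
    using assms by (metis image_eqI image_subset_iff subsetI subset_antisym)
  moreover have "inj f"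
    using assms(1) by (rule inj_on_inverseI)
  ultimately show ?thesis
    by (simp add: card_image inj_on_subset)
qed

theorem lemma2p4:
  fixes a :: "nat list" and n :: nat
  assumes "composition a" and "a \<noteq> []" and "last a = 2"
  shows "card (dominating_compositions a n) =
         card (dominating_compositions (butlast a @ [1, 1]) n)"
proof -
  have "a = butlast a @ [2]"
    using assms(2,3) by (metis append_butlast_last_id)
  then show ?thesis
    using card_eq_by_involution[OF swap_tail_after_involution
        dominating_compositions_swap_tail_after]
    by metis
qed

end
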